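(* Let $\mathfrak{R}$ be a complete rewriting system on $\Sigma$ and let $(w,r_1,r_2)$ be a triple, where $\ell_1$ and $\ell_2$ denote the left-hand sides of the rules $r_1$ and $r_2$ respectively. If $\mathrm{pre}(\ell_2)\cap\mathrm{suf}(\ell_1)=\emptyset$ or $\mathrm{pre}(\ell_1)\cap\mathrm{suf}(\ell_2)=\emptyset$, then the triple $(w,r_1,r_2)$ is $\tilde c$-defined.
   Context: $\Sigma^*$ is the free monoid on $\Sigma$; a rewriting system is a set of rules $l\to r$ with $l,r\in\Sigma^*$, complete meaning terminating and confluent; a rule $l\to r$ can be applied to a word if $l$ is a subword (factor) of it. A triple $(w,r_1,r_2)$ consists of a word $w$ and rules $r_1,r_2\in\mathfrak{R}$ such that $r_1$ can be applied to some cyclic conjugate of $w$ and $r_2$ can be applied to some (possibly different) cyclic conjugate of $w$ (cyclic conjugates taken in $\Sigma^*$: $ab$ and $ba$). The triple is $\tilde c$-defined if some single cyclic conjugate of $w$ admits application of both $r_1$ and $r_2$. For a word $w=x_1x_2\cdots x_k$ with letters $x_i\in\Sigma$, $\mathrm{pre}(w)=\{x_1,x_1x_2,\dots,x_1\cdots x_k\}$ (nonempty prefixes) and $\mathrm{suf}(w)=\{x_k,x_{k-1}x_k,\dots,x_1\cdots x_k\}$ (nonempty suffixes). *)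

theory Defs
  imports Main "HOL-Library.Sublist"
begin

type_synonym 'a rule = "'a list \<times> 'a list"

definition words :: "'a set \<Rightarrow> 'a list set" where
  "words \<Sigma> = lists \<Sigma>"

definition rstep :: "'a rule set \<Rightarrow> ('a list \<times> 'a list) set" where
  "rstep R = {(u, v). \<exists>x y l r. (l, r) \<in> R \<and> u = x @ l @ y \<and> v = x @ r @ y}"

definition terminating :: "'a rule set \<Rightarrow> bool" where
  "terminating R \<longleftrightarrow> wf ((rstep R)\<inverse>)"

definition confluent :: "'a rule set \<Rightarrow> bool" where
  "confluent R \<longleftrightarrow> (\<forall>u v1 v2. (u, v1) \<in> (rstep R)\<^sup>* \<and> (u, v2) \<in> (rstep R)\<^sup>* \<longrightarrow>
       (\<exists>z. (v1, z) \<in> (rstep R)\<^sup>* \<and> (v2, z) \<in> (rstep R)\<^sup>*))"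

definition rewriting_system :: "'a set \<Rightarrow> 'a rule set \<Rightarrow> bool" where
  "rewriting_system \<Sigma> R \<longleftrightarrow> (\<forall>(l, r) \<in> R. l \<in> words \<Sigma> \<and> r \<in> words \<Sigma>)"

definition complete_rs :: "'a set \<Rightarrow> 'a rule set \<Rightarrow> bool" where
  "complete_rs \<Sigma> R \<longleftrightarrow> rewriting_system \<Sigma> R \<and> terminating R \<and> confluent R"

definition applicable :: "'a rule \<Rightarrow> 'a list \<Rightarrow> bool" where
  "applicable \<rho> u \<longleftrightarrow> sublist (fst \<rho>) u"

definition cyc_conj :: "'a list \<Rightarrow> 'a list set" where
  "cyc_conj w = {v. \<exists>a b. w = a @ b \<and> v = b @ a}"

definition is_triple :: "'a set \<Rightarrow> 'a rule set \<Rightarrow> 'a list \<Rightarrow> 'a rule \<Rightarrow> 'a rule \<Rightarrow> bool" where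
  "is_triple \<Sigma> R w r1 r2 \<longleftrightarrow> w \<in> words \<Sigma> \<and> r1 \<in> R \<and> r2 \<in> R \<and>
     (\<exists>v \<in> cyc_conj w. applicable r1 v) \<and> (\<exists>v \<in> cyc_conj w. applicable r2 v)"

definition c_tilde_defined :: "'a list \<Rightarrow> 'a rule \<Rightarrow> 'a rule \<Rightarrow> bool" where
  "c_tilde_defined w r1 r2 \<longleftrightarrow> (\<exists>v \<in> cyc_conj w. applicable r1 v \<and> applicable r2 v)"

definition pre :: "'a list \<Rightarrow> 'a list set" where
  "pre w = {p. prefix p w \<and> p \<noteq> []}"

definition suf :: "'a list \<Rightarrow> 'a list set" where
  "suf w = {s. suffix s w \<and> s \<noteq> []}"

end

theory Submission
  imports Defs
begin

text \<open>Read a nonempty word \<open>w\<close> as the periodic sequence \<open>k \<mapsto> w ! (k mod |w|)\<close>; its cyclic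
  conjugates are exactly its windows of length \<open>|w|\<close>, and a left-hand side \<open>\<ell>\<close> of a rule occurs
  in a conjugate iff it occurs in this sequence (given \<open>|\<ell>| \<le> |w|\<close>). Take occurrences of \<open>\<ell>\<^sub>1\<close> at \<open>i\<close>
  and of \<open>\<ell>\<^sub>2\<close> at \<open>j\<close> with \<open>i \<le> j < i + |w|\<close>. If \<open>\<ell>\<^sub>2\<close> ends by position \<open>i + |w|\<close>, both lie in the
  window starting at \<open>i\<close>; if \<open>\<ell>\<^sub>1\<close> ends by \<open>j\<close>, both \<open>\<ell>\<^sub>2\<close> and the shifted copy of \<open>\<ell>\<^sub>1\<close> at \<open>i + |w|\<close>
  lie in the window starting at \<open>j\<close>. Otherwise \<open>\<ell>\<^sub>1\<close> overlaps \<open>\<ell>\<^sub>2\<close> from the left and \<open>\<ell>\<^sub>2\<close> overlaps the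
  copy of \<open>\<ell>\<^sub>1\<close> from the left, producing a common nonempty suffix/prefix on both sides.\<close>

lemma sublist_iff_nth:
  "sublist l v \<longleftrightarrow> (\<exists>p. p + length l \<le> length v \<and> (\<forall>t<length l. l ! t = v ! (p + t)))"
proof
  assume "sublist l v"
  then obtain ps ss where "v = ps @ l @ ss" by (auto simp: sublist_def)
  then show "\<exists>p. p + length l \<le> length v \<and> (\<forall>t<length l. l ! t = v ! (p + t))"
    by (intro exI[of _ "length ps"]) (simp add: nth_append)
next
  assume "\<exists>p. p + length l \<le> length v \<and> (\<forall>t<length l. l ! t = v ! (p + t))"
  then obtain p where p: "p + length l \<le> length v" "\<forall>t<length l. l ! t = v ! (p + t)" by blast
  have "take (length l) (drop p v) = l"
    by (rule nth_equalityI) (use p in auto)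
  then have "v = take p v @ l @ drop (length l) (drop p v)"
    by (metis append_take_drop_id)
  then show "sublist l v" unfolding sublist_def by blast
qed

lemma cyc_conj_eq_range_rotate: "cyc_conj w = range (\<lambda>c. rotate c w)"
proof (intro equalityI subsetI)
  fix v assume "v \<in> cyc_conj w"
  then obtain a b where "w = a @ b" "v = b @ a" unfolding cyc_conj_def by blast
  then have "v = rotate (length a) w" by (simp add: rotate_append)
  then show "v \<in> range (\<lambda>c. rotate c w)" by blast
next
  fix v assume "v \<in> range (\<lambda>c. rotate c w)"
  then obtain c where "v = rotate c w" by blast
  then show "v \<in> cyc_conj w"
    unfolding cyc_conj_def rotate_drop_take
    by (intro CollectI exI[of _ "take (c mod length w) w"] exI[of _ "drop (c mod length w) w"]) simp
qed

definition cyclic_nth :: "'a list \<Rightarrow> nat \<Rightarrow> 'a" where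
  "cyclic_nth w k = w ! (k mod length w)"

definition matches_at :: "(nat \<Rightarrow> 'a) \<Rightarrow> 'a list \<Rightarrow> nat \<Rightarrow> bool" where
  "matches_at s l i \<longleftrightarrow> (\<forall>t<length l. l ! t = s (i + t))"

lemma matches_at_cyclic_nth_mod:
  "matches_at (cyclic_nth w) l (i mod length w) \<longleftrightarrow> matches_at (cyclic_nth w) l i"
  by (simp add: matches_at_def cyclic_nth_def mod_add_left_eq)

lemma matches_at_cyclic_nth_add_length:
  "matches_at (cyclic_nth w) l (i + length w) \<longleftrightarrow> matches_at (cyclic_nth w) l i"
  by (metis matches_at_cyclic_nth_mod mod_add_self2)

lemma sublist_rotate_iff_matches_at:
  "sublist l (rotate c w) \<longleftrightarrow>
     (\<exists>p. p + length l \<le> length w \<and> matches_at (cyclic_nth w) l (c + p))"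
proof -
  have "rotate c w ! (p + t) = cyclic_nth w (c + p + t)" if "p + t < length w" for p t
    using that by (simp add: nth_rotate cyclic_nth_def add.assoc)
  then show ?thesis
    unfolding sublist_iff_nth matches_at_def by (auto simp: add.assoc)
qed

lemma sublist_cyc_conj_imp_matches_at:
  assumes "v \<in> cyc_conj w" "sublist l v"
  shows "length l \<le> length w \<and> (\<exists>i. matches_at (cyclic_nth w) l i)"
proof -
  obtain c where "v = rotate c w"
    using assms(1) by (auto simp: cyc_conj_eq_range_rotate)
  then show ?thesis
    using assms(2) by (auto simp: sublist_rotate_iff_matches_at)
qed

lemma matches_at_overlap:
  assumes m1: "matches_at s l1 i" and m2: "matches_at s l2 j"
    and "i \<le> j" "j < i + length l1" "i + length l1 \<le> j + length l2"
  shows "drop (j - i) l1 \<in> pre l2 \<inter> suf l1"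
proof -
  have "drop (j - i) l1 = take (length l1 - (j - i)) l2"
  proof (rule nth_equalityI)
    show "length (drop (j - i) l1) = length (take (length l1 - (j - i)) l2)"
      using assms(3-5) by simp
    fix t assume t: "t < length (drop (j - i) l1)"
    then have "drop (j - i) l1 ! t = s (j + t)"
      using m1 \<open>i \<le> j\<close> by (simp add: matches_at_def)
    also have "\<dots> = l2 ! t"
      using m2 t assms(3-5) by (simp add: matches_at_def)
    finally show "drop (j - i) l1 ! t = take (length l1 - (j - i)) l2 ! t"
      using t by simp
  qed
  then have "prefix (drop (j - i) l1) l2"
    by (simp add: take_is_prefix)
  moreover have "drop (j - i) l1 \<noteq> []"
    using assms(3,4) by simp
  ultimately show ?thesis
    by (simp add: pre_def suf_def suffix_drop)
qed

lemma common_rotation_or_two_sided_overlap: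
  assumes "w \<noteq> []"
    and m1: "matches_at (cyclic_nth w) l1 i" and m2: "matches_at (cyclic_nth w) l2 j"
    and len: "length l1 \<le> length w" "length l2 \<le> length w"
    and ij: "i \<le> j" "j < i + length w"
  shows "(\<exists>c. sublist l1 (rotate c w) \<and> sublist l2 (rotate c w)) \<or>
         (pre l2 \<inter> suf l1 \<noteq> {} \<and> pre l1 \<inter> suf l2 \<noteq> {})"
proof -
  let ?n = "length w"
  have m1': "matches_at (cyclic_nth w) l1 (i + ?n)"
    using m1 by (simp add: matches_at_cyclic_nth_add_length)
  consider "j + length l2 \<le> i + ?n" | "i + length l1 \<le> j"
    | "i + ?n < j + length l2" "j < i + length l1"
    by linarith
  then show ?thesis
  proof cases
    case 1
    have "sublist l1 (rotate i w)"
      unfolding sublist_rotate_iff_matches_at using m1 len by (intro exI[of _ 0]) simp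
    moreover have "sublist l2 (rotate i w)"
      unfolding sublist_rotate_iff_matches_at using m2 1 ij by (intro exI[of _ "j - i"]) simp
    ultimately show ?thesis by blast
  next
    case 2
    have "sublist l2 (rotate j w)"
      unfolding sublist_rotate_iff_matches_at using m2 len by (intro exI[of _ 0]) simp
    moreover have "sublist l1 (rotate j w)"
      unfolding sublist_rotate_iff_matches_at using m1' 2 ij by (intro exI[of _ "i + ?n - j"]) simp
    ultimately show ?thesis by blast
  next
    case 3
    have "drop (j - i) l1 \<in> pre l2 \<inter> suf l1"
      using 3 len ij by (intro matches_at_overlap[OF m1 m2]) linarith+
    moreover have "drop (i + ?n - j) l2 \<in> pre l1 \<inter> suf l2"
      using 3 len ij by (intro matches_at_overlap[OF m2 m1']) linarith+
    ultimately show ?thesis by blast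
  qed
qed

lemma common_rotation_if_no_overlap:
  assumes "w \<noteq> []"
    and "matches_at (cyclic_nth w) l1 i" "matches_at (cyclic_nth w) l2 j"
    and "length l1 \<le> length w" "length l2 \<le> length w"
    and "pre l2 \<inter> suf l1 = {} \<or> pre l1 \<inter> suf l2 = {}"
  shows "\<exists>c. sublist l1 (rotate c w) \<and> sublist l2 (rotate c w)"
proof -
  define i' j' where "i' = i mod length w" and "j' = j mod length w"
  have m: "matches_at (cyclic_nth w) l1 i'" "matches_at (cyclic_nth w) l2 j'"
    using assms(2,3) by (simp_all add: i'_def j'_def matches_at_cyclic_nth_mod)
  have bounds: "i' < length w" "j' < length w"
    using \<open>w \<noteq> []\<close> by (simp_all add: i'_def j'_def)
  show ?thesis
  proof (cases "i' \<le> j'")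
    case True
    then have "(\<exists>c. sublist l1 (rotate c w) \<and> sublist l2 (rotate c w)) \<or>
               (pre l2 \<inter> suf l1 \<noteq> {} \<and> pre l1 \<inter> suf l2 \<noteq> {})"
      using bounds by (intro common_rotation_or_two_sided_overlap[OF \<open>w \<noteq> []\<close> m assms(4,5)]) simp_all
    then show ?thesis using assms(6) by blast
  next
    case False
    then have "(\<exists>c. sublist l2 (rotate c w) \<and> sublist l1 (rotate c w)) \<or>
               (pre l1 \<inter> suf l2 \<noteq> {} \<and> pre l2 \<inter> suf l1 \<noteq> {})"
      using bounds by (intro common_rotation_or_two_sided_overlap[OF \<open>w \<noteq> []\<close> m(2,1) assms(5,4)]) simp_all
    then show ?thesis using assms(6) by blast
  qed
qed

theorem lemma5p2:
  fixes \<Sigma> :: "'a set" and R :: "'a rule set" and w :: "'a list"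
    and r1 r2 :: "'a rule"
  assumes "complete_rs \<Sigma> R"
    and "is_triple \<Sigma> R w r1 r2"
    and "pre (fst r2) \<inter> suf (fst r1) = {} \<or> pre (fst r1) \<inter> suf (fst r2) = {}"
  shows "c_tilde_defined w r1 r2"
proof (cases "w = []")
  case True
  then show ?thesis
    using assms(2) by (simp add: is_triple_def c_tilde_defined_def cyc_conj_eq_range_rotate)
next
  case False
  obtain i j where
    "length (fst r1) \<le> length w" "matches_at (cyclic_nth w) (fst r1) i"
    "length (fst r2) \<le> length w" "matches_at (cyclic_nth w) (fst r2) j"
    using assms(2) sublist_cyc_conj_imp_matches_at
    unfolding is_triple_def applicable_def by metis
  then obtain c where "sublist (fst r1) (rotate c w)" "sublist (fst r2) (rotate c w)"
    using common_rotation_if_no_overlap[OF False] assms(3) by blast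
  then show ?thesis
    unfolding c_tilde_defined_def applicable_def cyc_conj_eq_range_rotate by blast
qed

end
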